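(* Let $G$ be a graph with at least one isolated vertex such that $G\ne\widetilde G$ (i.e., $G$ has a pair of distinct twins). Then for every $t\ge 1$, \[\mu_t(\widetilde G)\cong \widetilde{\mu_t(G)}+(t-1)K_1.\]
   Context: All graphs are finite and simple. For a graph $G$ with $V(G)=\{v_1,\dots,v_n\}$ and an integer $t\ge1$, the generalized Mycielskian $\mu_t(G)$ has vertex set $\{u_i^s: 1\le i\le n,\ 0\le s\le t\}\cup\{w\}$, where $u_i^0$ is identified with $v_i$. Its edges are: $u_i^0u_j^0$ for each edge $v_iv_j$ of $G$; $u_i^su_j^{s+1}$ and $u_j^su_i^{s+1}$ for each edge $v_iv_j$ of $G$ and each $0\le s<t$; and $u_i^tw$ for all $1\le i\le n$. Two vertices are twins if they have the same open neighborhood; being twins is an equivalence relation $\sim$ on $V(G)$. The twin quotient $\widetilde G$ has as vertices the equivalence classes $[x]$ of $\sim$, with $[x]$ adjacent to $[z]$ iff some $p\in[x]$ and $q\in[z]$ are adjacent in $G$. $+$ denotes disjoint union and $(t-1)K_1$ denotes $t-1$ isolated vertices. *)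

theory Defs
  imports Main
begin

type_synonym 'a graph = "'a set \<times> 'a set set"

definition simple_graph :: "'a graph \<Rightarrow> bool" where
  "simple_graph G \<longleftrightarrow> finite (fst G) \<and>
     (\<forall>e\<in>snd G. \<exists>u v. u \<noteq> v \<and> u \<in> fst G \<and> v \<in> fst G \<and> e = {u, v})"

definition verts :: "'a graph \<Rightarrow> 'a set" where "verts G = fst G"
definition edges :: "'a graph \<Rightarrow> 'a set set" where "edges G = snd G"

definition adj :: "'a graph \<Rightarrow> 'a \<Rightarrow> 'a \<Rightarrow> bool" where
  "adj G u v \<longleftrightarrow> {u, v} \<in> edges G"

definition nbhd :: "'a graph \<Rightarrow> 'a \<Rightarrow> 'a set" where
  "nbhd G x = {y \<in> verts G. adj G x y}"

definition isolated :: "'a graph \<Rightarrow> 'a \<Rightarrow> bool" where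
  "isolated G x \<longleftrightarrow> x \<in> verts G \<and> nbhd G x = {}"

definition twins :: "'a graph \<Rightarrow> 'a \<Rightarrow> 'a \<Rightarrow> bool" where
  "twins G x y \<longleftrightarrow> x \<in> verts G \<and> y \<in> verts G \<and> nbhd G x = nbhd G y"

definition twin_class :: "'a graph \<Rightarrow> 'a \<Rightarrow> 'a set" where
  "twin_class G x = {y. twins G x y}"

definition twin_quotient :: "'a graph \<Rightarrow> 'a set graph" where
  "twin_quotient G =
     (twin_class G ` verts G,
      {{X, Z} | X Z. X \<in> twin_class G ` verts G \<and> Z \<in> twin_class G ` verts G \<and>
                    (\<exists>p\<in>X. \<exists>q\<in>Z. adj G p q)})"

text \<open>Generalized Mycielskian: vertex \<open>u_i^s\<close> is \<open>Some (v_i, s)\<close>, the apex \<open>w\<close> is \<open>None\<close>;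
  \<open>u_i^0\<close> is identified with \<open>v_i\<close>.\<close>
definition mycielskian :: "nat \<Rightarrow> 'a graph \<Rightarrow> ('a \<times> nat) option graph" where
  "mycielskian t G =
     ({Some (v, s) | v s. v \<in> verts G \<and> s \<le> t} \<union> {None},
      {{Some (u, 0), Some (v, 0)} | u v. adj G u v}
      \<union> {{Some (u, s), Some (v, Suc s)} | u v s. adj G u v \<and> s < t}
      \<union> {{Some (v, t), None} | v. v \<in> verts G})"

definition add_isolated :: "'a graph \<Rightarrow> nat \<Rightarrow> ('a + nat) graph" where
  "add_isolated G k = (Inl ` verts G \<union> Inr ` {..<k}, (\<lambda>e. Inl ` e) ` edges G)"

definition graph_iso :: "'a graph \<Rightarrow> 'b graph \<Rightarrow> bool" where
  "graph_iso G H \<longleftrightarrow> (\<exists>f. bij_betw f (verts G) (verts H) \<and>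
     (\<forall>u\<in>verts G. \<forall>v\<in>verts G. adj G u v \<longleftrightarrow> adj H (f u) (f v)))"

end

theory Submission
  imports Defs
begin

text \<open>In \<open>\<mu>\<^sub>t(G)\<close> the apex \<open>w\<close> is a twin of no other vertex, and \<open>u\<^sub>a\<^sup>s\<close>, \<open>u\<^sub>b\<^sup>s\<^sup>'\<close>
  are twins iff \<open>N(a) = N(b)\<close> and either \<open>s = s'\<close> or \<open>a\<close>, \<open>b\<close> are isolated and \<open>s, s' < t\<close>
  (all those copies are isolated). Hence sending \<open>u\<^sub>X\<^sup>s\<close> of \<open>\<mu>\<^sub>t(G\<^sup>~)\<close> to the twin class of
  \<open>u\<^sub>r\<^sup>s\<close>, for a representative \<open>r\<close> of \<open>X\<close>, preserves adjacency and is injective except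
  on the \<open>t\<close> copies \<open>u\<^sub>X\<^sub>0\<^sup>s\<close>, \<open>s < t\<close>, of the class \<open>X\<^sub>0\<close> of isolated vertices, which it
  merges. These copies are isolated in \<open>\<mu>\<^sub>t(G\<^sup>~)\<close>; dropping all but \<open>s = 0\<close> gives the
  \<open>(t - 1)K\<^sub>1\<close>.\<close>

lemma adj_commute: "adj G u v \<longleftrightarrow> adj G v u"
  by (simp add: adj_def insert_commute)

lemma simple_graph_adjD:
  assumes "simple_graph G" "adj G u v"
  shows "u \<in> verts G" "v \<in> verts G" "u \<noteq> v"
proof -
  obtain x y where "x \<noteq> y" "x \<in> verts G" "y \<in> verts G" "{u, v} = {x, y}"
    using assms unfolding simple_graph_def adj_def edges_def verts_def by blast
  then show "u \<in> verts G" "v \<in> verts G" "u \<noteq> v"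
    by (auto simp: doubleton_eq_iff)
qed

lemma isolated_not_adj:
  assumes "simple_graph G" "isolated G x"
  shows "\<not> adj G x y"
  using assms simple_graph_adjD(2)[OF assms(1), of x y] by (auto simp: isolated_def nbhd_def)

lemma twin_class_self: "a \<in> verts G \<Longrightarrow> a \<in> twin_class G a"
  by (simp add: twin_class_def twins_def)

lemma twin_class_eq_iff:
  "a \<in> verts G \<Longrightarrow> b \<in> verts G \<Longrightarrow> twin_class G a = twin_class G b \<longleftrightarrow> nbhd G a = nbhd G b"
  unfolding twin_class_def twins_def by auto

section \<open>The generalized Mycielskian\<close>

lemma verts_mycielskian:
  "verts (mycielskian t G) = {Some (v, s) | v s. v \<in> verts G \<and> s \<le> t} \<union> {None}"
  by (simp add: mycielskian_def verts_def)

lemma adj_mycielskian_Some_Some [simp]: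
  "adj (mycielskian t G) (Some (a, s)) (Some (b, s')) \<longleftrightarrow>
     adj G a b \<and> ((s = 0 \<and> s' = 0) \<or> (s' = Suc s \<and> s < t) \<or> (s = Suc s' \<and> s' < t))"
  unfolding adj_def[of "mycielskian t G"] by (auto simp: mycielskian_def edges_def doubleton_eq_iff adj_commute)

lemma adj_mycielskian_Some_None [simp]:
  "adj (mycielskian t G) (Some (a, s)) None \<longleftrightarrow> a \<in> verts G \<and> s = t"
  unfolding adj_def[of "mycielskian t G"] by (auto simp: mycielskian_def edges_def doubleton_eq_iff)

lemma adj_mycielskian_None_Some [simp]:
  "adj (mycielskian t G) None (Some (a, s)) \<longleftrightarrow> a \<in> verts G \<and> s = t"
  by (subst adj_commute) (rule adj_mycielskian_Some_None)

lemma not_adj_mycielskian_None_None [simp]: "\<not> adj (mycielskian t G) None None"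
  unfolding adj_def[of "mycielskian t G"] by (auto simp: mycielskian_def edges_def doubleton_eq_iff)

lemma simple_graph_mycielskian:
  assumes "simple_graph G"
  shows "simple_graph (mycielskian t G)"
proof -
  have "verts (mycielskian t G) = Some ` (verts G \<times> {..t}) \<union> {None}"
    by (auto simp: verts_mycielskian)
  then have "finite (verts (mycielskian t G))"
    using assms by (simp add: simple_graph_def verts_def)
  moreover have "u \<in> verts (mycielskian t G) \<and> v \<in> verts (mycielskian t G) \<and> u \<noteq> v"
    if "adj (mycielskian t G) u v" for u v
    using that simple_graph_adjD[OF assms]
    by (cases u; cases v) (auto simp: verts_mycielskian, blast)
  moreover have "\<exists>u v. e = {u, v}" if "e \<in> edges (mycielskian t G)" for e
    using that by (auto simp: mycielskian_def edges_def)
  ultimately show ?thesis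
    unfolding simple_graph_def verts_def[symmetric] edges_def[symmetric]
    by (metis adj_def)
qed

lemma isolated_mycielskian:
  assumes "simple_graph G" "isolated G a" "s < t"
  shows "isolated (mycielskian t G) (Some (a, s))"
proof -
  have "\<not> adj (mycielskian t G) (Some (a, s)) y" for y
    using assms isolated_not_adj[OF assms(1,2)] by (cases y) auto
  then show ?thesis
    using assms by (auto simp: isolated_def nbhd_def verts_mycielskian)
qed

lemma nbhd_mycielskian_Some:
  assumes "simple_graph G" "a \<in> verts G"
  shows "nbhd (mycielskian t G) (Some (a, s)) =
    {Some (c, x) | c x. c \<in> nbhd G a \<and> x \<le> t \<and>
       ((s = 0 \<and> x = 0) \<or> (x = Suc s \<and> s < t) \<or> (s = Suc x \<and> x < t))}
    \<union> (if s = t then {None} else {})"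
  using assms simple_graph_adjD[OF assms(1)]
  by (auto simp: nbhd_def verts_mycielskian)

lemma None_in_nbhd_mycielskian_iff:
  "a \<in> verts G \<Longrightarrow> None \<in> nbhd (mycielskian t G) (Some (a, s)) \<longleftrightarrow> s = t"
  by (simp add: nbhd_def verts_mycielskian)

lemma nbhd_mycielskian_None_neq:
  assumes "simple_graph G" "b \<in> verts G"
  shows "nbhd (mycielskian t G) None \<noteq> nbhd (mycielskian t G) (Some (b, s))"
proof -
  have "Some (b, t) \<in> nbhd (mycielskian t G) None"
    using assms by (auto simp: nbhd_def verts_mycielskian)
  moreover have "Some (b, t) \<notin> nbhd (mycielskian t G) (Some (b, s))"
    using simple_graph_adjD(3)[OF assms(1)] by (auto simp: nbhd_def)
  ultimately show ?thesis by blast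
qed

lemma nbhd_mycielskian_eq_nonisolatedD:
  assumes G: "simple_graph G" and a: "a \<in> verts G" and b: "b \<in> verts G"
    and s: "s \<le> t" and s': "s' \<le> t" and ne: "nbhd G a \<noteq> {}"
    and eq: "nbhd (mycielskian t G) (Some (a, s)) = nbhd (mycielskian t G) (Some (b, s'))"
  shows "s = s' \<and> nbhd G a \<subseteq> nbhd G b"
proof -
  let ?C = "\<lambda>s x. (s = 0 \<and> x = 0) \<or> (x = Suc s \<and> s < t) \<or> (s = Suc x \<and> x < t)"
  have mem: "Some (c, x) \<in> nbhd (mycielskian t G) (Some (d, r)) \<longleftrightarrow> c \<in> nbhd G d \<and> x \<le> t \<and> ?C r x"
    if "d \<in> verts G" for c x d r
    using nbhd_mycielskian_Some[OF G that] by auto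
  have top: "s = t \<longleftrightarrow> s' = t"
    using eq None_in_nbhd_mycielskian_iff[OF a] None_in_nbhd_mycielskian_iff[OF b] by blast
  \<comment> \<open>\<open>u\<^sub>c\<^sup>s\<^sup>-\<^sup>1\<close> is a neighbour of \<open>u\<^sub>a\<^sup>s\<close> for each \<open>c \<in> N(a)\<close>; for \<open>s = 0\<close> the truncated \<open>s - 1 = 0\<close> still works.\<close>
  have below: "s - 1 \<le> t" "?C s (s - 1)"
    using s by auto
  have sub: "nbhd G a \<subseteq> nbhd G b"
  proof
    fix c assume "c \<in> nbhd G a"
    then have "Some (c, s - 1) \<in> nbhd (mycielskian t G) (Some (b, s'))"
      using mem[OF a, of c "s - 1" s] eq below by simp
    then show "c \<in> nbhd G b"
      using mem[OF b] by simp
  qed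
  obtain c where c: "c \<in> nbhd G a"
    using ne by blast
  with sub have cb: "c \<in> nbhd G b"
    by blast
  have levels: "?C s y \<longleftrightarrow> ?C s' y" if y: "y \<le> t" for y
  proof -
    from eq have "Some (c, y) \<in> nbhd (mycielskian t G) (Some (a, s)) \<longleftrightarrow>
        Some (c, y) \<in> nbhd (mycielskian t G) (Some (b, s'))"
      by simp
    with mem[OF a, of c y s] mem[OF b, of c y s'] c cb y show ?thesis
      by blast
  qed
  have "s = s'"
  proof (cases "s = t")
    case False
    with s s' top have "Suc s \<le> t" "Suc s' \<le> t"
      by auto
    then have "?C s' (Suc s)" "?C s (Suc s')"
      using levels[of "Suc s"] levels[of "Suc s'"] by simp_all
    then show ?thesis
      by auto
  qed (use top in simp)
  with sub show ?thesis by blast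
qed

lemma nbhd_mycielskian_eq_iff:
  assumes G: "simple_graph G" and a: "a \<in> verts G" and b: "b \<in> verts G"
    and s: "s \<le> t" and s': "s' \<le> t"
  shows "nbhd (mycielskian t G) (Some (a, s)) = nbhd (mycielskian t G) (Some (b, s')) \<longleftrightarrow>
    nbhd G a = nbhd G b \<and> (s = s' \<or> nbhd G a = {} \<and> s < t \<and> s' < t)"
proof
  assume eq: "nbhd (mycielskian t G) (Some (a, s)) = nbhd (mycielskian t G) (Some (b, s'))"
  show "nbhd G a = nbhd G b \<and> (s = s' \<or> nbhd G a = {} \<and> s < t \<and> s' < t)"
  proof (cases "nbhd G a = {} \<and> nbhd G b = {}")
    case True
    have "s = t \<longleftrightarrow> s' = t"
      using eq None_in_nbhd_mycielskian_iff[OF a] None_in_nbhd_mycielskian_iff[OF b] by blast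
    with True s s' show ?thesis by auto
  next
    case False
    then show ?thesis
      using nbhd_mycielskian_eq_nonisolatedD[OF G a b s s' _ eq]
        nbhd_mycielskian_eq_nonisolatedD[OF G b a s' s _ eq[symmetric]] by blast
  qed
next
  assume "nbhd G a = nbhd G b \<and> (s = s' \<or> nbhd G a = {} \<and> s < t \<and> s' < t)"
  then show "nbhd (mycielskian t G) (Some (a, s)) = nbhd (mycielskian t G) (Some (b, s'))"
    by (auto simp: nbhd_mycielskian_Some[OF G a] nbhd_mycielskian_Some[OF G b])
qed

lemma adj_mycielskian_map:
  assumes "\<forall>X\<in>verts H. \<phi> X \<in> verts G"
    and "\<forall>X\<in>verts H. \<forall>Y\<in>verts H. adj H X Y \<longleftrightarrow> adj G (\<phi> X) (\<phi> Y)"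
    and "u \<in> verts (mycielskian t H)" "v \<in> verts (mycielskian t H)"
  shows "adj (mycielskian t H) u v \<longleftrightarrow>
    adj (mycielskian t G) (map_option (apfst \<phi>) u) (map_option (apfst \<phi>) v)"
  using assms by (cases u; cases v) (auto simp: verts_mycielskian)

section \<open>The twin quotient\<close>

definition twin_rep :: "'a set \<Rightarrow> 'a" where
  "twin_rep X = (SOME v. v \<in> X)"

lemma verts_twin_quotient: "verts (twin_quotient G) = twin_class G ` verts G"
  by (simp add: twin_quotient_def verts_def)

lemma twin_rep_in_twin_class:
  assumes "X \<in> verts (twin_quotient G)"
  shows "twin_rep X \<in> verts G" "twin_class G (twin_rep X) = X"
proof -
  obtain v where v: "v \<in> verts G" "X = twin_class G v"
    using assms by (auto simp: verts_twin_quotient)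
  then have "twin_rep X \<in> X"
    unfolding twin_rep_def by (meson someI twin_class_self)
  then have "twins G v (twin_rep X)"
    using v by (simp add: twin_class_def)
  then show "twin_rep X \<in> verts G" "twin_class G (twin_rep X) = X"
    using v by (auto simp: twins_def twin_class_eq_iff)
qed

lemma adj_twin_quotient:
  assumes G: "simple_graph G" and a: "a \<in> verts G" and b: "b \<in> verts G"
  shows "adj (twin_quotient G) (twin_class G a) (twin_class G b) \<longleftrightarrow> adj G a b"
proof
  assume "adj G a b"
  then show "adj (twin_quotient G) (twin_class G a) (twin_class G b)"
    using a b twin_class_self[OF a] twin_class_self[OF b]
    unfolding adj_def[of "twin_quotient G"] by (auto simp: twin_quotient_def edges_def)
next
  have class_adj: "adj G a b" if p: "p \<in> twin_class G a" and q: "q \<in> twin_class G b" and "adj G p q" for p q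
  proof -
    have "q \<in> nbhd G p"
      using \<open>adj G p q\<close> simple_graph_adjD[OF G] by (simp add: nbhd_def)
    then have "a \<in> nbhd G q"
      using p a by (auto simp: twin_class_def twins_def nbhd_def adj_commute)
    then show "adj G a b"
      using q by (auto simp: twin_class_def twins_def nbhd_def adj_commute)
  qed
  assume "adj (twin_quotient G) (twin_class G a) (twin_class G b)"
  then obtain X Z p q where "{twin_class G a, twin_class G b} = {X, Z}" "p \<in> X" "q \<in> Z" "adj G p q"
    unfolding adj_def[of "twin_quotient G"] by (auto simp: twin_quotient_def edges_def)
  then show "adj G a b"
    using class_adj[of p q] class_adj[of q p] adj_commute[of G p q] by (auto simp: doubleton_eq_iff)
qed

lemma adj_twin_quotient_twin_rep:
  assumes "simple_graph G" "X \<in> verts (twin_quotient G)" "Y \<in> verts (twin_quotient G)"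
  shows "adj (twin_quotient G) X Y \<longleftrightarrow> adj G (twin_rep X) (twin_rep Y)"
  using adj_twin_quotient[OF assms(1)] twin_rep_in_twin_class[OF assms(2)] twin_rep_in_twin_class[OF assms(3)]
  by metis

lemma edges_twin_quotient:
  "edges (twin_quotient G) = {{X, Z} | X Z. X \<in> verts (twin_quotient G) \<and> Z \<in> verts (twin_quotient G) \<and>
     (\<exists>p\<in>X. \<exists>q\<in>Z. adj G p q)}"
  by (simp add: twin_quotient_def edges_def verts_def)

lemma simple_graph_twin_quotient:
  assumes G: "simple_graph G"
  shows "simple_graph (twin_quotient G)"
proof -
  have distinct: "X \<noteq> Z"
    if X: "X \<in> verts (twin_quotient G)" and pq: "p \<in> X" "q \<in> Z" "adj G p q" for X Z p q
  proof
    assume "X = Z"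
    with X pq obtain a where "a \<in> verts G" "p \<in> twin_class G a" "q \<in> twin_class G a"
      unfolding verts_twin_quotient by blast
    then have "nbhd G p = nbhd G q"
      by (simp add: twin_class_def twins_def)
    moreover have "q \<in> nbhd G p"
      using pq(3) simple_graph_adjD(2)[OF G] by (simp add: nbhd_def)
    ultimately have "adj G q q"
      by (simp add: nbhd_def)
    then show False
      using simple_graph_adjD(3)[OF G] by blast
  qed
  have "finite (verts G)"
    using G by (simp add: simple_graph_def verts_def)
  then have "finite (verts (twin_quotient G))"
    unfolding verts_twin_quotient by (rule finite_imageI)
  moreover have "\<exists>X Z. X \<noteq> Z \<and> X \<in> verts (twin_quotient G) \<and> Z \<in> verts (twin_quotient G) \<and> e = {X, Z}"
    if e: "e \<in> edges (twin_quotient G)" for e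
  proof -
    obtain X Z p q where XZ: "e = {X, Z}" "X \<in> verts (twin_quotient G)" "Z \<in> verts (twin_quotient G)"
      and pq: "p \<in> X" "q \<in> Z" "adj G p q"
      using e unfolding edges_twin_quotient by auto
    moreover have "X \<noteq> Z"
      using distinct[OF XZ(2) pq] .
    ultimately show ?thesis by blast
  qed
  ultimately show ?thesis
    unfolding simple_graph_def verts_def[symmetric] edges_def[symmetric] by blast
qed

lemma isolated_twin_quotient:
  assumes G: "simple_graph G" and x: "isolated G x"
  shows "isolated (twin_quotient G) (twin_class G x)"
proof -
  have xV: "x \<in> verts G"
    using x by (simp add: isolated_def)
  have "\<not> adj (twin_quotient G) (twin_class G x) Y" if Y: "Y \<in> verts (twin_quotient G)" for Y
  proof -
    obtain b where "b \<in> verts G" "Y = twin_class G b"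
      using Y unfolding verts_twin_quotient by blast
    then show ?thesis
      using adj_twin_quotient[OF G xV] isolated_not_adj[OF G x] by simp
  qed
  moreover have "twin_class G x \<in> verts (twin_quotient G)"
    using xV by (simp add: verts_twin_quotient)
  ultimately show ?thesis
    by (auto simp: isolated_def nbhd_def)
qed

lemma verts_add_isolated: "verts (add_isolated H k) = Inl ` verts H \<union> Inr ` {..<k}"
  by (simp add: add_isolated_def verts_def)

lemma adj_add_isolated_Inl_Inl [simp]: "adj (add_isolated H k) (Inl a) (Inl b) \<longleftrightarrow> adj H a b"
proof -
  have "inj ((`) Inl :: 'a set \<Rightarrow> ('a + nat) set)"
    by (simp add: inj_on_image)
  from inj_image_mem_iff[OF this]
  have "(Inl ` {a, b} :: ('a + nat) set) \<in> (`) Inl ` edges H \<longleftrightarrow> {a, b} \<in> edges H" .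
  then show ?thesis
    by (simp add: adj_def add_isolated_def edges_def)
qed

lemma not_adj_add_isolated_Inr [simp]:
  "\<not> adj (add_isolated H k) (Inr n) x" "\<not> adj (add_isolated H k) x (Inr n)"
  by (auto simp: adj_def add_isolated_def edges_def)

lemma graph_iso_add_isolatedI:
  assumes H: "simple_graph H" and I: "\<forall>u\<in>I. isolated H u"
    and h: "bij_betw h I {..<k}" and g: "bij_betw g (verts H - I) (verts K)"
    and adj: "\<forall>u\<in>verts H - I. \<forall>v\<in>verts H - I. adj H u v \<longleftrightarrow> adj K (g u) (g v)"
  shows "graph_iso H (add_isolated K k)"
proof -
  define f where "f u = (if u \<in> I then Inr (h u) else Inl (g u))" for u
  have "bij_betw f (I \<union> (verts H - I)) (Inr ` {..<k} \<union> Inl ` verts K)"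
    unfolding f_def
    by (rule bij_betw_disjoint_Un) (use h g in \<open>auto simp: bij_betw_def inj_on_def\<close>)
  moreover have "I \<union> (verts H - I) = verts H"
    using I by (auto simp: isolated_def)
  ultimately have bij: "bij_betw f (verts H) (verts (add_isolated K k))"
    by (simp add: verts_add_isolated Un_commute)
  have no_adj: "\<not> adj H u v \<and> \<not> adj H v u" if "u \<in> I" for u v
    using isolated_not_adj[OF H] I that adj_commute by metis
  have "\<forall>u\<in>verts H. \<forall>v\<in>verts H. adj H u v \<longleftrightarrow> adj (add_isolated K k) (f u) (f v)"
    using adj no_adj by (auto simp: f_def)
  with bij show ?thesis
    unfolding graph_iso_def by blast
qed

section \<open>Twins in the Mycielskian of a graph with an isolated vertex\<close>

abbreviation twin_rep_lift :: "('a set \<times> nat) option \<Rightarrow> ('a \<times> nat) option" where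
  "twin_rep_lift \<equiv> map_option (apfst twin_rep)"

context
  fixes G :: "'a graph" and t :: nat and x0 :: 'a
  assumes simple: "simple_graph G" and isolated_x0: "isolated G x0"
begin

abbreviation "isolated_copies \<equiv> {Some (twin_class G x0, s) | s. 0 < s \<and> s < t}"

lemma twin_rep_isolated_iff:
  assumes "X \<in> verts (twin_quotient G)"
  shows "nbhd G (twin_rep X) = {} \<longleftrightarrow> X = twin_class G x0"
  using twin_rep_in_twin_class[OF assms] twin_class_eq_iff[of "twin_rep X" G x0] isolated_x0
  by (auto simp: isolated_def)

lemma twin_rep_lift_in_verts:
  "u \<in> verts (mycielskian t (twin_quotient G)) \<Longrightarrow> twin_rep_lift u \<in> verts (mycielskian t G)"
  using twin_rep_in_twin_class(1)[of _ G] by (auto simp: verts_mycielskian)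

lemma nbhd_mycielskian_twin_rep_eq_iff:
  assumes X: "X \<in> verts (twin_quotient G)" "s \<le> t" and Z: "Z \<in> verts (twin_quotient G)" "s' \<le> t"
  shows "nbhd (mycielskian t G) (Some (twin_rep X, s)) = nbhd (mycielskian t G) (Some (twin_rep Z, s')) \<longleftrightarrow>
    X = Z \<and> (s = s' \<or> X = twin_class G x0 \<and> s < t \<and> s' < t)"
proof -
  have "nbhd G (twin_rep X) = nbhd G (twin_rep Z) \<longleftrightarrow> X = Z"
    using twin_rep_in_twin_class[OF X(1)] twin_rep_in_twin_class[OF Z(1)] twin_class_eq_iff by metis
  moreover note twin_rep_isolated_iff[OF X(1)]
  moreover note nbhd_mycielskian_eq_iff[OF simple twin_rep_in_twin_class(1)[OF X(1)]
    twin_rep_in_twin_class(1)[OF Z(1)] X(2) Z(2)]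
  ultimately show ?thesis
    by simp
qed

lemma twin_class_twin_rep_lift_eq_iff:
  assumes u: "u \<in> verts (mycielskian t (twin_quotient G))"
    and v: "v \<in> verts (mycielskian t (twin_quotient G))"
  shows "twin_class (mycielskian t G) (twin_rep_lift u) = twin_class (mycielskian t G) (twin_rep_lift v) \<longleftrightarrow>
    u = v \<or> (\<exists>s s'. u = Some (twin_class G x0, s) \<and> v = Some (twin_class G x0, s') \<and> s < t \<and> s' < t)"
    (is "_ \<longleftrightarrow> ?rhs")
proof -
  have None_neq: "nbhd (mycielskian t G) None \<noteq> nbhd (mycielskian t G) (twin_rep_lift w)"
    if "w \<in> verts (mycielskian t (twin_quotient G))" "w \<noteq> None" for w
    using that twin_rep_in_twin_class(1)[of _ G] nbhd_mycielskian_None_neq[OF simple]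
    by (auto simp: verts_mycielskian)
  have "nbhd (mycielskian t G) (twin_rep_lift u) = nbhd (mycielskian t G) (twin_rep_lift v) \<longleftrightarrow> ?rhs"
  proof (cases "u = None \<or> v = None")
    case True
    then show ?thesis
      using None_neq[OF u] None_neq[OF v] by (cases u; cases v) auto
  next
    case False
    then obtain X s Z s' where "u = Some (X, s)" "v = Some (Z, s')"
      by auto
    with u v nbhd_mycielskian_twin_rep_eq_iff show ?thesis
      by (auto simp: verts_mycielskian)
  qed
  then show ?thesis
    using twin_class_eq_iff twin_rep_lift_in_verts[OF u] twin_rep_lift_in_verts[OF v] by metis
qed

lemma isolated_copies_isolated: "\<forall>u\<in>isolated_copies. isolated (mycielskian t (twin_quotient G)) u"
  using isolated_mycielskian[OF simple_graph_twin_quotient[OF simple] isolated_twin_quotient[OF simple isolated_x0]]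
  by blast

lemma bij_betw_isolated_copies: "bij_betw (\<lambda>u. snd (the u) - 1) isolated_copies {..<t - 1}"
  by (rule bij_betw_byWitness[where f' = "\<lambda>k. Some (twin_class G x0, Suc k)"]) auto

lemma adj_twin_class_twin_rep_lift:
  assumes "u \<in> verts (mycielskian t (twin_quotient G))" "v \<in> verts (mycielskian t (twin_quotient G))"
  shows "adj (mycielskian t (twin_quotient G)) u v \<longleftrightarrow>
    adj (twin_quotient (mycielskian t G))
      (twin_class (mycielskian t G) (twin_rep_lift u)) (twin_class (mycielskian t G) (twin_rep_lift v))"
  using adj_mycielskian_map[OF _ _ assms, of twin_rep G] twin_rep_in_twin_class
    adj_twin_quotient_twin_rep[OF simple]
    adj_twin_quotient[OF simple_graph_mycielskian[OF simple]
      twin_rep_lift_in_verts[OF assms(1)] twin_rep_lift_in_verts[OF assms(2)]]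
  by blast

lemma bij_betw_twin_class_twin_rep_lift:
  "bij_betw (\<lambda>u. twin_class (mycielskian t G) (twin_rep_lift u))
     (verts (mycielskian t (twin_quotient G)) - isolated_copies) (verts (twin_quotient (mycielskian t G)))"
proof -
  let ?V = "verts (mycielskian t (twin_quotient G))"
  let ?g = "\<lambda>u. twin_class (mycielskian t G) (twin_rep_lift u)"
  have X0: "Some (twin_class G x0, 0) \<in> ?V - isolated_copies"
    using isolated_twin_quotient[OF simple isolated_x0] by (simp add: isolated_def verts_mycielskian)
  have inj: "inj_on ?g (?V - isolated_copies)"
  proof (rule inj_onI)
    fix u v assume u: "u \<in> ?V - isolated_copies" and v: "v \<in> ?V - isolated_copies" and "?g u = ?g v"
    then have "u = v \<or> (\<exists>s s'. u = Some (twin_class G x0, s) \<and> v = Some (twin_class G x0, s') \<and> s < t \<and> s' < t)"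
      using twin_class_twin_rep_lift_eq_iff[of u v] by blast
    with u v show "u = v"
      by auto
  qed
  have "twin_class (mycielskian t G) m \<in> ?g ` ?V" if m: "m \<in> verts (mycielskian t G)" for m
  proof (cases m)
    case None
    moreover have "None \<in> ?V"
      by (simp add: verts_mycielskian)
    ultimately show ?thesis
      by (intro image_eqI[of _ _ None]) simp_all
  next
    case (Some z)
    then obtain v s where m_eq: "m = Some (v, s)" and v: "v \<in> verts G" "s \<le> t"
      using m by (auto simp: verts_mycielskian)
    let ?X = "twin_class G v"
    have X: "?X \<in> verts (twin_quotient G)"
      using v by (simp add: verts_twin_quotient)
    then have XV: "Some (?X, s) \<in> ?V"
      using v(2) by (simp add: verts_mycielskian)
    have "nbhd G (twin_rep ?X) = nbhd G v"
      using twin_rep_in_twin_class[OF X] v twin_class_eq_iff by metis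
    then have "nbhd (mycielskian t G) (twin_rep_lift (Some (?X, s))) = nbhd (mycielskian t G) m"
      using nbhd_mycielskian_eq_iff[OF simple twin_rep_in_twin_class(1)[OF X] v(1)] m_eq v(2) by simp
    then have "twin_class (mycielskian t G) m = ?g (Some (?X, s))"
      using twin_class_eq_iff[OF twin_rep_lift_in_verts[OF XV] m] by simp
    with XV show ?thesis
      by blast
  qed
  then have onto: "verts (twin_quotient (mycielskian t G)) \<subseteq> ?g ` ?V"
    by (auto simp: verts_twin_quotient)
  have "?g u \<in> ?g ` (?V - isolated_copies)" if u: "u \<in> isolated_copies" for u
  proof -
    have "u \<in> ?V"
      using isolated_copies_isolated u by (auto simp: isolated_def)
    then have "?g u = ?g (Some (twin_class G x0, 0))"
      using twin_class_twin_rep_lift_eq_iff[of u "Some (twin_class G x0, 0)"] X0 u by auto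
    with X0 show ?thesis
      by blast
  qed
  then have into_rest: "?g ` ?V \<subseteq> ?g ` (?V - isolated_copies)"
    by blast
  have into_verts: "?g ` ?V \<subseteq> verts (twin_quotient (mycielskian t G))"
    unfolding verts_twin_quotient using twin_rep_lift_in_verts by blast
  have "?g ` (?V - isolated_copies) = verts (twin_quotient (mycielskian t G))"
  proof
    show "?g ` (?V - isolated_copies) \<subseteq> verts (twin_quotient (mycielskian t G))"
      using image_mono[OF Diff_subset] into_verts by (rule subset_trans)
    show "verts (twin_quotient (mycielskian t G)) \<subseteq> ?g ` (?V - isolated_copies)"
      using onto into_rest by (rule subset_trans)
  qed
  with inj show ?thesis
    unfolding bij_betw_def by blast
qed

end

theorem mainTheorem5:
  fixes G :: "'a graph" and t :: nat
  assumes "simple_graph G"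
    and "\<exists>x. isolated G x"
    and "\<exists>x y. x \<noteq> y \<and> twins G x y"
    and "t \<ge> 1"
  shows "graph_iso (mycielskian t (twin_quotient G))
                   (add_isolated (twin_quotient (mycielskian t G)) (t - 1))"
proof -
  obtain x0 where x0: "isolated G x0"
    using assms(2) by blast
  note G = assms(1)
  have "simple_graph (mycielskian t (twin_quotient G))"
    using G by (intro simple_graph_mycielskian simple_graph_twin_quotient)
  from graph_iso_add_isolatedI[OF this isolated_copies_isolated[OF G x0] bij_betw_isolated_copies[OF G x0]
      bij_betw_twin_class_twin_rep_lift[OF G x0]]
  show ?thesis
    using adj_twin_class_twin_rep_lift[OF G x0] by blast
qed

end
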